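(* Let $\beta=\beta_n>0$, $p_1=p_1(n)\ge n$, $p_2=p_2(n)\ge n$, $p=p_1+p_2$, and suppose that as $n\to\infty$, $n/p_1\to0$, $p_1/p_2\to\sigma\in[0,\infty)$ and $\beta n\to\infty$. Then $$\log A_n^{p_1,p_2}=\frac{\beta p_1}{2}\log\frac{p}{p_1}+\frac{\beta p_2}{2}\log\frac{p}{p_2}+\frac{\beta(n-1)}{2}\log\frac{p}{n}+\frac12\log(\beta p_1)+\frac12\beta n+o(\beta n).$$
   Context: $$A_n^{p_1,p_2}=\frac{\Gamma(1+\frac\beta2)\Gamma(\frac{\beta p}{2})\Gamma(\frac{\beta(p-1)}{2})}{\Gamma(1+\frac{\beta n}{2})\Gamma(\frac{\beta p_1}{2})\Gamma(\frac{\beta p_2}{2})\Gamma(\frac{\beta(p-n)}{2})}.$$ *)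

theory Defs
  imports "HOL-Analysis.Analysis" "HOL-Library.Landau_Symbols"
begin

definition A_const :: "real \<Rightarrow> nat \<Rightarrow> nat \<Rightarrow> nat \<Rightarrow> real" where
  "A_const \<beta> n p1 p2 =
     (let p = real p1 + real p2 in
      Gamma (1 + \<beta> / 2) * Gamma (\<beta> * p / 2) * Gamma (\<beta> * (p - 1) / 2) /
      (Gamma (1 + \<beta> * real n / 2) * Gamma (\<beta> * real p1 / 2) * Gamma (\<beta> * real p2 / 2)
       * Gamma (\<beta> * (p - real n) / 2)))"

end

(*
  Write ln \<Gamma>(z) = (z - 1/2) ln z - z + R(z). R is bounded on [1, \<infinity>): it is continuous on
  [1, 2], and R(z + 1) - R(z) = 1 - (z + 1/2) ln (1 + 1/z) = O(1/z\<^sup>2) telescopes.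
  Put x = \<beta>/2 and p = p1 + p2. Every Gamma argument in A except 1 + x is at least x n \<ge> 1, and
  substituting Stirling's formula there turns ln A into the stated main terms plus an explicit
  remainder: bounded terms, x ((p-1) ln (p-1) - (p-n) ln (p-n) - (n-1) ln p - n) = O(x + x n\<^sup>2/p),
  - x ln n, and ln \<Gamma>(1 + x) - x ln x + x - ln (x n)/2 = O(1 + ln (x n)). Each is o(\<beta>n) because
  \<beta>n \<rightarrow> \<infinity>, n \<rightarrow> \<infinity> and n/p1 \<rightarrow> 0; the limit \<sigma> only keeps p2/p away from 0, so that
  ln (p2/p) stays bounded.
*)

theory Submission
  imports Defs "HOL-Real_Asymp.Real_Asymp"
begin

lemma ln_one_plus_le_cubic:
  fixes u :: real
  assumes "0 \<le> u"
  shows "ln (1 + u) \<le> u - u^2/2 + u^3/3"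
proof -
  let ?f = "\<lambda>t::real. ln (1 + t) - (t - t^2/2 + t^3/3)"
  have "?f u \<le> ?f 0"
  proof (rule DERIV_nonpos_imp_decreasing_open[OF assms])
    fix t :: real assume t: "0 < t" "t < u"
    have "1 \<le> (1+t) * (1 - t + t^2)"
      using t by (simp add: algebra_simps power2_eq_square power3_eq_cube)
    then have "1/(1+t) - (1 - t + t^2) \<le> 0"
      using t by (simp add: field_simps)
    moreover have "DERIV ?f t :> 1/(1+t) - (1 - t + t^2)"
      using t by (auto intro!: derivative_eq_intros simp: power2_eq_square)
    ultimately show "\<exists>y. DERIV ?f t :> y \<and> y \<le> 0" by blast
  qed (intro continuous_intros, auto)
  then show ?thesis by simp
qed

lemma ln_one_plus_ge_quartic:
  fixes u :: real
  assumes "0 \<le> u"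
  shows "u - u^2/2 + u^3/3 - u^4/4 \<le> ln (1 + u)"
proof -
  let ?f = "\<lambda>t::real. ln (1 + t) - (t - t^2/2 + t^3/3 - t^4/4)"
  have "?f 0 \<le> ?f u"
  proof (rule DERIV_nonneg_imp_increasing_open[OF assms])
    fix t :: real assume t: "0 < t" "t < u"
    have "(1+t) * (1 - t + t^2 - t^3) \<le> 1"
      using t by (simp add: algebra_simps power2_eq_square power3_eq_cube power4_eq_xxxx)
    then have "0 \<le> 1/(1+t) - (1 - t + t^2 - t^3)"
      using t by (simp add: field_simps)
    moreover have "DERIV ?f t :> 1/(1+t) - (1 - t + t^2 - t^3)"
      using t by (auto intro!: derivative_eq_intros simp: power2_eq_square power3_eq_cube)
    ultimately show "\<exists>y. DERIV ?f t :> y \<and> 0 \<le> y" by blast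
  qed (intro continuous_intros, auto)
  then show ?thesis by simp
qed

text \<open>The bound \<open>2/(z (z + 1))\<close> is written as a telescoping difference, so that it sums
  along \<open>z, z + 1, z + 2, \<dots>\<close>.\<close>

lemma ln_one_plus_inverse_estimate:
  fixes z :: real
  assumes z: "1 \<le> z"
  shows "\<bar>1 - (z + 1/2) * ln (1 + 1/z)\<bar> \<le> 2/z - 2/(z + 1)"
proof -
  define u where "u = 1/z"
  have u: "0 < u" "u \<le> 1" and zu: "z = 1/u"
    using z by (auto simp: u_def)
  have factor: "z + 1/2 = (2 + u) / (2*u)" and pos: "0 \<le> (2 + u) / (2*u)"
    using u by (simp_all add: zu field_simps)
  have "(z + 1/2) * ln (1 + 1/z) \<le> (2 + u) / (2*u) * (u - u^2/2 + u^3/3)"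
    and "(2 + u) / (2*u) * (u - u^2/2 + u^3/3 - u^4/4) \<le> (z + 1/2) * ln (1 + 1/z)"
    unfolding factor u_def[symmetric] using u
    by (intro mult_left_mono pos ln_one_plus_le_cubic ln_one_plus_ge_quartic; simp)+
  moreover have "(2 + u) / (2*u) * (u - u^2/2 + u^3/3) = 1 + u^2/12 + u^3/6"
    and "(2 + u) / (2*u) * (u - u^2/2 + u^3/3 - u^4/4) = 1 + u^2/12 - u^3/12 - u^4/8"
    using u by (simp_all add: field_simps power2_eq_square power3_eq_cube power4_eq_xxxx)
  moreover have "2/z - 2/(z + 1) = 2*u^2 / (1 + u)"
    using u by (simp add: zu field_simps power2_eq_square)
  moreover have "u^3 \<le> u^2" "u^4 \<le> u^2" "u^2/4 \<le> 2*u^2 / (1 + u)"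
    using u by (auto intro: power_decreasing simp: field_simps)
  ultimately show ?thesis by (simp add: abs_le_iff)
qed

lemma ln_Gamma_real_plus1:
  fixes z :: real
  assumes "0 < z"
  shows "ln (Gamma (z + 1)) = ln z + ln (Gamma z)"
proof -
  have "Gamma (z + 1) = z * Gamma z"
    using assms by (intro Gamma_plus1) auto
  then show ?thesis
    using assms by (simp add: ln_mult_pos)
qed

definition stirling_rem :: "real \<Rightarrow> real" where
  "stirling_rem z = ln (Gamma z) - ((z - 1/2) * ln z - z)"

lemma stirling_rem_plus1:
  fixes z :: real
  assumes "1 \<le> z"
  shows "\<bar>stirling_rem (z + 1) - stirling_rem z\<bar> \<le> 2/z - 2/(z + 1)"
proof -
  have "1 + 1/z = (z + 1) / z"
    using assms by (simp add: field_simps)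
  then have ln_ratio: "ln (1 + 1/z) = ln (z + 1) - ln z"
    using assms by (simp add: ln_div)
  have "ln (Gamma (z + 1)) = ln z + ln (Gamma z)"
    using assms by (intro ln_Gamma_real_plus1) simp
  then have "stirling_rem (z + 1) - stirling_rem z = 1 - (z + 1/2) * ln (1 + 1/z)"
    unfolding stirling_rem_def ln_ratio by (simp add: algebra_simps)
  then show ?thesis
    using ln_one_plus_inverse_estimate[OF assms] by simp
qed

lemma stirling_rem_shift:
  fixes z :: real
  assumes "1 \<le> z"
  shows "\<bar>stirling_rem (z + real k) - stirling_rem z\<bar> \<le> 2/z - 2/(z + real k)"
proof (induction k)
  case 0
  then show ?case by simp
next
  case (Suc k)
  have "\<bar>stirling_rem (z + real (Suc k)) - stirling_rem (z + real k)\<bar>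
      \<le> 2/(z + real k) - 2/(z + real (Suc k))"
    using stirling_rem_plus1[of "z + real k"] assms by (simp add: ac_simps)
  with Suc.IH show ?case by linarith
qed

lemma stirling_rem_bounded:
  obtains C where "\<And>z. 1 \<le> z \<Longrightarrow> \<bar>stirling_rem z\<bar> \<le> C"
proof -
  have "continuous_on {1..2} stirling_rem"
    unfolding stirling_rem_def
    by (intro continuous_intros continuous_on_Gamma)
       (auto simp: nonpos_Ints_def Gamma_eq_zero_iff)
  then have "bounded (stirling_rem ` {1..2})"
    by (intro compact_imp_bounded compact_continuous_image) auto
  then obtain B where B: "\<And>z. z \<in> {1..2} \<Longrightarrow> \<bar>stirling_rem z\<bar> \<le> B"
    unfolding bounded_iff by (auto simp del: atLeastAtMost_iff)
  have "\<bar>stirling_rem z\<bar> \<le> B + 2" if z: "1 \<le> z" for z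
  proof -
    define k where "k = nat \<lfloor>z\<rfloor> - 1"
    define z0 where "z0 = z - real k"
    have z0: "z0 \<in> {1..2}" and "z = z0 + real k"
      using z by (auto simp: z0_def k_def of_nat_diff) linarith+
    then have "\<bar>stirling_rem z - stirling_rem z0\<bar> \<le> 2/z0 - 2/z"
      using stirling_rem_shift[of z0 k] by simp
    moreover have "0 \<le> 2/z" "2/z0 \<le> 2"
      using z z0 by (auto simp: field_simps)
    ultimately show ?thesis
      using B[OF z0] by linarith
  qed
  then show thesis by (rule that)
qed

text \<open>\<open>ln N\<close> is grouped with \<open>ln x\<close> because \<open>x\<close> (which will be \<open>\<beta>/2\<close>) may tend to \<open>0\<close>:
  only \<open>x N\<close> is known to be large, and \<open>- ln x / 2\<close> alone is not \<open>O(1)\<close>.\<close>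

lemma ln_Gamma_one_plus_estimate:
  fixes x N C :: real
  assumes C: "\<And>z. 1 \<le> z \<Longrightarrow> \<bar>stirling_rem z\<bar> \<le> C"
    and x: "0 < x" and N: "1 \<le> N" and xN: "1 \<le> x * N"
  shows "\<bar>ln (Gamma (1 + x)) - (x * ln x - x) - ln (x * N) / 2\<bar> \<le> C + 2 + ln (x * N)"
proof -
  have ln_xN: "ln (x * N) = ln x + ln N"
    using x N by (simp add: ln_mult_pos)
  have "0 \<le> ln (x * N)"
    using xN by simp
  show ?thesis
  proof (cases "1 \<le> x")
    case True
    have "ln (Gamma (1 + x)) = ln x + ln (Gamma x)"
      using ln_Gamma_real_plus1[of x] x by (simp add: add.commute)
    then have "ln (Gamma (1 + x)) - (x * ln x - x) - ln (x * N) / 2 = stirling_rem x - ln N / 2"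
      unfolding stirling_rem_def ln_xN by (simp add: algebra_simps add_divide_distrib)
    moreover have "ln N \<le> ln (x * N)"
      using True N by simp
    ultimately show ?thesis
      using C[OF True] ln_ge_zero[OF N] by (simp add: abs_le_iff)
  next
    case False
    have "ln (Gamma (1 + x)) = (x + 1/2) * ln (1 + x) - (1 + x) + stirling_rem (1 + x)"
      unfolding stirling_rem_def by simp
    moreover have "0 \<le> (x + 1/2) * ln (1 + x)" "(x + 1/2) * ln (1 + x) \<le> 3/2"
      using x False ln_add_one_self_le_self[of x] mult_mono[of "x + 1/2" "3/2" "ln (1 + x)" 1]
      by auto
    moreover have "x - 1 \<le> x * ln x"
      using ln_le_minus_one[of "1/x"] x by (simp add: ln_div field_simps)
    moreover have "x * ln x \<le> 0"
      using x False by (simp add: mult_nonneg_nonpos)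
    moreover have "\<bar>stirling_rem (1 + x)\<bar> \<le> C"
      using C x by simp
    ultimately show ?thesis
      using x \<open>0 \<le> ln (x * N)\<close> by linarith
  qed
qed

lemma ln_diff_bounds:
  fixes a b :: real
  assumes "0 < a" "0 < b"
  shows "1 - b/a \<le> ln a - ln b" "ln a - ln b \<le> a/b - 1"
  using ln_le_minus_one[of "b/a"] ln_le_minus_one[of "a/b"] assms by (simp_all add: ln_div)

lemma xlnx_increment_estimate:
  fixes N P :: real
  assumes "1 \<le> N" "2 * N \<le> P"
  shows "\<bar>(P - 1) * ln (P - 1) - (P - N) * ln (P - N) - (N - 1) * ln P - N\<bar> \<le> 1 + N^2/P"
proof -
  have p: "0 < P - 1" "0 < P - N" "0 < P"
    using assms by auto
  have "(P - 1) * (1 - P/(P - 1)) \<le> (P - 1) * (ln (P - 1) - ln P)"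
    "(P - 1) * (ln (P - 1) - ln P) \<le> (P - 1) * ((P - 1)/P - 1)"
    "(P - N) * (1 - (P - N)/P) \<le> (P - N) * (ln P - ln (P - N))"
    "(P - N) * (ln P - ln (P - N)) \<le> (P - N) * (P/(P - N) - 1)"
    using ln_diff_bounds[of "P - 1" P] ln_diff_bounds[of P "P - N"] p
    by (intro mult_left_mono; simp)+
  moreover have "(P - 1) * (1 - P/(P - 1)) = -1" "(P - 1) * ((P - 1)/P - 1) \<le> 0"
    "(P - N) * (1 - (P - N)/P) = N - N^2/P" "(P - N) * (P/(P - N) - 1) = N"
    using p by (simp_all add: field_simps power2_eq_square)
  moreover have "(P - 1) * ln (P - 1) - (P - N) * ln (P - N) - (N - 1) * ln P
      = (P - 1) * (ln (P - 1) - ln P) + (P - N) * (ln P - ln (P - N))"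
    by (simp add: algebra_simps)
  moreover have "0 \<le> N^2/P"
    using p by simp
  ultimately show ?thesis by (simp add: abs_le_iff)
qed

definition ln_A_approx :: "real \<Rightarrow> real \<Rightarrow> real \<Rightarrow> real \<Rightarrow> real" where
  "ln_A_approx b N P1 P2 =
     b * P1 / 2 * ln ((P1 + P2) / P1) + b * P2 / 2 * ln ((P1 + P2) / P2)
     + b * (N - 1) / 2 * ln ((P1 + P2) / N) + 1/2 * ln (b * P1) + 1/2 * b * N"

lemma ln_A_const_decomposition:
  fixes x :: real and n p1 p2 :: nat
  defines "N \<equiv> real n" and "P1 \<equiv> real p1" and "P2 \<equiv> real p2" and "P \<equiv> real p1 + real p2"
  assumes x: "0 < x" and n: "1 \<le> n" "n \<le> p1" "n \<le> p2"
  shows "ln (A_const (2 * x) n p1 p2) - ln_A_approx (2 * x) N P1 P2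
    = (stirling_rem (x * P) + stirling_rem (x * (P - 1)) - stirling_rem (x * N)
       - stirling_rem (x * P1) - stirling_rem (x * P2) - stirling_rem (x * (P - N)))
      + x * ((P - 1) * ln (P - 1) - (P - N) * ln (P - N) - (N - 1) * ln P - N)
      + (ln (Gamma (1 + x)) - (x * ln x - x) - ln (x * N) / 2)
      - x * ln N + ln (P2 / P) / 2 + ln ((P - N) / (P - 1)) / 2 - ln 2 / 2"
proof -
  have pos: "1 \<le> N" "N \<le> P1" "N \<le> P2" "P = P1 + P2"
    using n by (simp_all add: N_def P1_def P2_def P_def)
  then have pos': "0 < x * P" "0 < x * (P - 1)" "0 < x * N" "0 < x * P1" "0 < x * P2"
    "0 < x * (P - N)"
    using x by (auto intro!: mult_pos_pos)
  have Gamma_pos: "0 < Gamma (1 + x)" "0 < Gamma (x * P)" "0 < Gamma (x * (P - 1))"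
    "0 < Gamma (x * N + 1)" "0 < Gamma (x * P1)" "0 < Gamma (x * P2)" "0 < Gamma (x * (P - N))"
    using pos' x by simp_all
  have "A_const (2 * x) n p1 p2 = Gamma (1 + x) * Gamma (x * P) * Gamma (x * (P - 1))
      / (Gamma (x * N + 1) * Gamma (x * P1) * Gamma (x * P2) * Gamma (x * (P - N)))"
    by (simp add: A_const_def Let_def N_def P1_def P2_def P_def add.commute)
  also have "ln \<dots> = ln (Gamma (1 + x)) + ln (Gamma (x * P)) + ln (Gamma (x * (P - 1)))
        - (ln (Gamma (x * N + 1)) + ln (Gamma (x * P1)) + ln (Gamma (x * P2))
           + ln (Gamma (x * (P - N))))"
    using Gamma_pos by (simp add: ln_div ln_mult_pos mult_pos_pos)
  finally have "ln (A_const (2 * x) n p1 p2)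
      = ln (Gamma (1 + x)) + ln (Gamma (x * P)) + ln (Gamma (x * (P - 1)))
        - (ln (Gamma (x * N)) + ln (x * N)) - ln (Gamma (x * P1)) - ln (Gamma (x * P2))
        - ln (Gamma (x * (P - N)))"
    using ln_Gamma_real_plus1[OF pos'(3)] by simp
  moreover have lns: "ln (x * P) = ln x + ln P" "ln (x * (P - 1)) = ln x + ln (P - 1)"
    "ln (x * N) = ln x + ln N" "ln (x * P1) = ln x + ln P1" "ln (x * P2) = ln x + ln P2"
    "ln (x * (P - N)) = ln x + ln (P - N)" "ln (P / P1) = ln P - ln P1"
    "ln (P / P2) = ln P - ln P2" "ln (P / N) = ln P - ln N" "ln (2 * x * P1) = ln 2 + ln x + ln P1"
    "ln (P2 / P) = ln P2 - ln P" "ln ((P - N) / (P - 1)) = ln (P - N) - ln (P - 1)"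
    using pos pos' x by (simp_all add: ln_mult_pos ln_div)
  moreover have PP: "P1 + P2 = P"
    using pos by simp
  ultimately show ?thesis
    unfolding stirling_rem_def ln_A_approx_def PP lns
    by (simp add: pos(4) algebra_simps add_divide_distrib diff_divide_distrib)
qed

lemma ln_shifted_ratio_bounds:
  fixes N P :: real
  assumes "1 \<le> N" "2 * N \<le> P"
  shows "- 1 \<le> ln ((P - N) / (P - 1))" "ln ((P - N) / (P - 1)) \<le> 0"
proof -
  have t: "1/2 \<le> (P - N) / (P - 1)" "(P - N) / (P - 1) \<le> 1"
    using assms by (simp_all add: field_simps)
  then have "ln (1/2) \<le> ln ((P - N) / (P - 1))" "ln ((P - N) / (P - 1)) \<le> 0"
    by (subst ln_le_cancel_iff ln_le_zero_iff; linarith)+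
  moreover have "ln (1/2 :: real) = - ln 2" "ln (2 :: real) \<le> 1"
    using ln_le_minus_one[of 2] by (simp_all add: ln_div)
  ultimately show "- 1 \<le> ln ((P - N) / (P - 1))" "ln ((P - N) / (P - 1)) \<le> 0"
    by linarith+
qed

lemma ln_A_const_error_bound:
  fixes x c C :: real and n p1 p2 :: nat
  assumes C: "\<And>z. 1 \<le> z \<Longrightarrow> \<bar>stirling_rem z\<bar> \<le> C"
    and x: "0 < x" and n: "1 \<le> n" "n \<le> p1" "n \<le> p2" and xn: "1 \<le> x * real n"
    and c: "0 < c" "c \<le> real p2 / (real p1 + real p2)"
  shows "\<bar>ln (A_const (2 * x) n p1 p2) - ln_A_approx (2 * x) (real n) (real p1) (real p2)\<bar>
    \<le> 7 * C + 3 + \<bar>ln c\<bar> + ln (x * real n) + x * (1 + ln (real n)) + x * real n ^ 2 / real p1"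
proof -
  define N P1 P2 P where "N = real n" and "P1 = real p1" and "P2 = real p2"
    and "P = real p1 + real p2"
  have NP: "1 \<le> N" "N \<le> P1" "N \<le> P2" "P = P1 + P2" "1 \<le> x * N"
    using n xn by (simp_all add: N_def P1_def P2_def P_def)
  have "x * N \<le> x * P" "x * N \<le> x * (P - 1)" "x * N \<le> x * P1" "x * N \<le> x * P2"
    "x * N \<le> x * (P - N)"
    using NP x by (intro mult_left_mono; simp)+
  then have "\<bar>stirling_rem (x * P) + stirling_rem (x * (P - 1)) - stirling_rem (x * N)
       - stirling_rem (x * P1) - stirling_rem (x * P2) - stirling_rem (x * (P - N))\<bar> \<le> 6 * C"
    using C[of "x * P"] C[of "x * (P - 1)"] C[of "x * N"] C[of "x * P1"] C[of "x * P2"]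
      C[of "x * (P - N)"] NP(5) by linarith
  moreover have "\<bar>x * ((P - 1) * ln (P - 1) - (P - N) * ln (P - N) - (N - 1) * ln P - N)\<bar>
      \<le> x * (1 + N^2/P1)"
  proof -
    have "\<bar>(P - 1) * ln (P - 1) - (P - N) * ln (P - N) - (N - 1) * ln P - N\<bar> \<le> 1 + N^2/P"
      using NP by (intro xlnx_increment_estimate) auto
    also have "\<dots> \<le> 1 + N^2/P1"
      using NP by (simp add: divide_left_mono)
    finally show ?thesis
      using x by (simp add: abs_mult)
  qed
  moreover have "\<bar>ln (Gamma (1 + x)) - (x * ln x - x) - ln (x * N) / 2\<bar> \<le> C + 2 + ln (x * N)"
    using ln_Gamma_one_plus_estimate[OF C x] NP by simp
  moreover have "0 \<le> x * ln N" "x * (1 + ln N) = x + x * ln N"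
    "x * (1 + N^2/P1) = x + x * N^2 / P1"
    using x NP by (simp_all add: distrib_left)
  moreover have "ln c \<le> ln (P2 / P)" "ln (P2 / P) \<le> 0"
    using c NP by (simp_all add: P2_def P_def)
  moreover have "- 1 \<le> ln ((P - N) / (P - 1))" "ln ((P - N) / (P - 1)) \<le> 0"
    using NP by (intro ln_shifted_ratio_bounds; simp)+
  moreover have "0 \<le> ln (2 :: real)" "ln (2 :: real) \<le> 1"
    using ln_le_minus_one[of 2] by simp_all
  moreover note ln_A_const_decomposition[OF x n]
  ultimately show ?thesis
    unfolding N_def P1_def P2_def P_def by linarith
qed

lemma ln_A_error_bound_smallo:
  fixes \<beta> q :: "nat \<Rightarrow> real" and K :: real
  assumes \<beta>: "filterlim (\<lambda>n. \<beta> n * real n) at_top sequentially"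
    and q: "(\<lambda>n. real n / q n) \<longlonglongrightarrow> 0"
  shows "(\<lambda>n. K + ln (\<beta> n / 2 * real n) + \<beta> n / 2 * (1 + ln (real n))
      + \<beta> n / 2 * real n ^ 2 / q n) \<in> o(\<lambda>n. \<beta> n * real n)"
proof (rule smalloI_tendsto)
  have "\<forall>\<^sub>F n in sequentially. 0 < \<beta> n * real n"
    using \<beta> by (simp add: filterlim_at_top_dense)
  then have ev: "\<forall>\<^sub>F n in sequentially. \<beta> n \<noteq> 0 \<and> real n \<noteq> 0"
    by eventually_elim (intro conjI notI; simp)
  then show "\<forall>\<^sub>F n in sequentially. \<beta> n * real n \<noteq> 0"
    by eventually_elim simp
  have "((\<lambda>t. (K + ln (t / 2)) / t) \<longlongrightarrow> 0) at_top"
    by real_asymp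
  from filterlim_compose[OF this \<beta>]
  have first: "(\<lambda>n. (K + ln (\<beta> n * real n / 2)) / (\<beta> n * real n)) \<longlonglongrightarrow> 0"
    by (simp add: o_def)
  have "(\<lambda>n. (K + ln (\<beta> n * real n / 2)) / (\<beta> n * real n)
      + (1 + ln (real n)) / (2 * real n) + real n / q n / 2) \<longlonglongrightarrow> 0"
    by (intro tendsto_add_zero tendsto_divide_zero first q) real_asymp
  then show "(\<lambda>n. (K + ln (\<beta> n / 2 * real n) + \<beta> n / 2 * (1 + ln (real n))
      + \<beta> n / 2 * real n ^ 2 / q n) / (\<beta> n * real n)) \<longlonglongrightarrow> 0"
  proof (rule Lim_transform_eventually)
    show "\<forall>\<^sub>F n in sequentially. (K + ln (\<beta> n * real n / 2)) / (\<beta> n * real n)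
      + (1 + ln (real n)) / (2 * real n) + real n / q n / 2
      = (K + ln (\<beta> n / 2 * real n) + \<beta> n / 2 * (1 + ln (real n))
      + \<beta> n / 2 * real n ^ 2 / q n) / (\<beta> n * real n)"
      using ev by eventually_elim (simp add: field_simps power2_eq_square)
  qed
qed

theorem lemma3:
  fixes \<beta> :: "nat \<Rightarrow> real" and p1 p2 :: "nat \<Rightarrow> nat" and \<sigma> :: real
  assumes beta_pos: "\<And>n. \<beta> n > 0"
    and p1_ge: "\<And>n. p1 n \<ge> n"
    and p2_ge: "\<And>n. p2 n \<ge> n"
    and lim1: "(\<lambda>n. real n / real (p1 n)) \<longlonglongrightarrow> 0"
    and sigma_nonneg: "\<sigma> \<ge> 0"
    and lim2: "(\<lambda>n. real (p1 n) / real (p2 n)) \<longlonglongrightarrow> \<sigma>"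
    and lim3: "filterlim (\<lambda>n. \<beta> n * real n) at_top sequentially"
  shows "(\<lambda>n. ln (A_const (\<beta> n) n (p1 n) (p2 n))
            - (\<beta> n * real (p1 n) / 2 * ln ((real (p1 n) + real (p2 n)) / real (p1 n))
             + \<beta> n * real (p2 n) / 2 * ln ((real (p1 n) + real (p2 n)) / real (p2 n))
             + \<beta> n * (real n - 1) / 2 * ln ((real (p1 n) + real (p2 n)) / real n)
             + 1/2 * ln (\<beta> n * real (p1 n))
             + 1/2 * \<beta> n * real n))
         \<in> o(\<lambda>n. \<beta> n * real n)"
    (is "?D \<in> _")
proof -
  obtain C where C: "\<And>z. 1 \<le> z \<Longrightarrow> \<bar>stirling_rem z\<bar> \<le> C"
    using stirling_rem_bounded by blast
  define c where "c = 1 / (\<sigma> + 2)"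
  define K where "K = 7 * C + 3 + \<bar>ln c\<bar>"
  have "\<forall>\<^sub>F n in sequentially. 1 \<le> n \<and> 2 \<le> \<beta> n * real n \<and> real (p1 n) / real (p2 n) < \<sigma> + 1"
    using eventually_ge_at_top lim3[unfolded filterlim_at_top] order_tendstoD(2)[OF lim2]
    by (intro eventually_conj) auto
  then have "\<forall>\<^sub>F n in sequentially. \<bar>?D n\<bar> \<le> K + ln (\<beta> n / 2 * real n)
      + \<beta> n / 2 * (1 + ln (real n)) + \<beta> n / 2 * real n ^ 2 / real (p1 n)"
  proof eventually_elim
    case (elim n)
    have "real (p1 n) < (\<sigma> + 1) * real (p2 n)"
      using elim p2_ge[of n] by (simp add: divide_less_eq)
    then have "c \<le> real (p2 n) / (real (p1 n) + real (p2 n))"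
      using sigma_nonneg p2_ge[of n] elim by (simp add: c_def field_simps)
    then show ?case
      using ln_A_const_error_bound[OF C, of "\<beta> n / 2" n "p1 n" "p2 n" c] elim
        beta_pos[of n] p1_ge[of n] p2_ge[of n] sigma_nonneg
      by (simp add: K_def c_def ln_A_approx_def)
  qed
  then have "?D \<in> O(\<lambda>n. K + ln (\<beta> n / 2 * real n)
      + \<beta> n / 2 * (1 + ln (real n)) + \<beta> n / 2 * real n ^ 2 / real (p1 n))"
    by (intro bigoI[where c = 1]) (auto elim!: eventually_mono)
  also have "(\<lambda>n. K + ln (\<beta> n / 2 * real n)
      + \<beta> n / 2 * (1 + ln (real n)) + \<beta> n / 2 * real n ^ 2 / real (p1 n)) \<in> o(\<lambda>n. \<beta> n * real n)"
    by (rule ln_A_error_bound_smallo[OF lim3 lim1])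
  finally show ?thesis .
qed

end
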